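(* Let $G$ be a graph and let $0<d<1<u$ be parameters. Assume that the minimum degree satisfies $\delta(G[S])\le d(|S|-1)$ for every vertex subset $S\subseteq V(G)$ with $|S|\ge u$. Then for every vertex subset $W\subseteq V(G)$ with $|W|\ge u$, $$\alpha(G[W])\ge-\log_{(1-d)(1-1/u)}\big(|W|/u\big).$$
   Context: For a graph $H$, $\delta(H)$ denotes its minimum degree and $\alpha(H)$ the size of a largest independent set; $G[S]$ denotes the subgraph of $G$ induced by $S$. *)

theory Defs
  imports Complex_Main
begin

text \<open>A finite simple graph: finite vertex set V and a symmetric, irreflexive
adjacency relation E (only its restriction to V matters).\<close>

definition simple_graph :: "'a set \<Rightarrow> ('a \<Rightarrow> 'a \<Rightarrow> bool) \<Rightarrow> bool" where
  "simple_graph V E \<longleftrightarrow> finite V \<and> (\<forall>x y. E x y \<longrightarrow> E y x) \<and> (\<forall>x. \<not> E x x)"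

definition deg_in :: "('a \<Rightarrow> 'a \<Rightarrow> bool) \<Rightarrow> 'a set \<Rightarrow> 'a \<Rightarrow> nat" where
  "deg_in E S v = card {w \<in> S. E v w}"

text \<open>Minimum degree of the induced subgraph G[S] (S finite, nonempty).\<close>
definition min_degree :: "('a \<Rightarrow> 'a \<Rightarrow> bool) \<Rightarrow> 'a set \<Rightarrow> nat" where
  "min_degree E S = Min (deg_in E S ` S)"

definition independent :: "('a \<Rightarrow> 'a \<Rightarrow> bool) \<Rightarrow> 'a set \<Rightarrow> bool" where
  "independent E I \<longleftrightarrow> (\<forall>x\<in>I. \<forall>y\<in>I. \<not> E x y)"

text \<open>Independence number of the induced subgraph G[W] (W finite).\<close>
definition indep_number :: "('a \<Rightarrow> 'a \<Rightarrow> bool) \<Rightarrow> 'a set \<Rightarrow> nat" where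
  "indep_number E W = Max {card I | I. I \<subseteq> W \<and> independent E I}"

end

theory Submission
  imports Defs
begin

text \<open>Greedy argument: while the current set has at least \<open>u\<close> vertices, put a vertex of
  minimum degree into the independent set and delete its closed neighbourhood. The hypothesis
  on minimum degrees makes each deletion keep at least a fraction \<open>q = (1 - d) (1 - 1/u)\<close>
  of the vertices, so after \<open>k\<close> steps at least \<open>q^k |W|\<close> vertices remain; the process
  therefore continues as long as \<open>q^k |W| \<ge> u\<close>, and taking logarithms gives the bound.\<close>

lemma independent_insert:
  assumes "simple_graph V E" "independent E I" "\<forall>w\<in>I. \<not> E v w"
  shows "independent E (insert v I)"
  using assms unfolding simple_graph_def independent_def by blast

lemma card_le_indep_number:
  assumes "finite W" "I \<subseteq> W" "independent E I"
  shows "card I \<le> indep_number E W"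
  unfolding indep_number_def
proof (rule Max_ge)
  have "{card I |I. I \<subseteq> W \<and> independent E I} \<subseteq> card ` Pow W" by auto
  then show "finite {card I |I. I \<subseteq> W \<and> independent E I}"
    using assms(1) finite_subset by blast
qed (use assms in auto)

lemma obtain_min_degree_vertex:
  assumes "finite S" "S \<noteq> {}"
  obtains v where "v \<in> S" "deg_in E S v = min_degree E S"
proof -
  have "min_degree E S \<in> deg_in E S ` S"
    unfolding min_degree_def using assms by (intro Min_in) auto
  then show thesis using that by auto
qed

lemma card_Diff_closed_neighbourhood:
  assumes "simple_graph V E" "finite S" "v \<in> S"
  shows "real (card (S - insert v {w \<in> S. E v w})) = real (card S) - 1 - real (deg_in E S v)"
proof -
  let ?N = "{w \<in> S. E v w}"
  have "v \<notin> ?N" using assms(1) by (simp add: simple_graph_def)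
  have sub: "insert v ?N \<subseteq> S" using assms(3) by auto
  have "finite ?N" using assms(2) by simp
  have "card (insert v ?N) \<le> card S" using assms(2) sub by (rule card_mono)
  then show ?thesis
    using card_Diff_subset[OF _ sub] \<open>finite ?N\<close> \<open>v \<notin> ?N\<close> by (simp add: deg_in_def)
qed

lemma removal_keeps_fraction:
  fixes n k d u :: real
  assumes "k \<le> d * (n - 1)" "d \<le> 1" "0 < u" "u \<le> n"
  shows "(1 - d) * (1 - 1 / u) * n \<le> n - 1 - k"
proof -
  have "1 \<le> n / u" using assms(3,4) by simp
  then have "(1 - 1 / u) * n \<le> n - 1"
    by (simp add: algebra_simps)
  then have "(1 - d) * ((1 - 1 / u) * n) \<le> (1 - d) * (n - 1)"
    using assms(2) by (intro mult_left_mono) auto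
  then show ?thesis using assms(1) by (simp add: algebra_simps)
qed

lemma greedy_independent_set:
  fixes V :: "'a set" and E :: "'a \<Rightarrow> 'a \<Rightarrow> bool" and d u :: real
  assumes graph: "simple_graph V E" and "d \<le> 1" "1 \<le> u"
    and min_degree_le: "\<And>S. S \<subseteq> V \<Longrightarrow> real (card S) \<ge> u \<Longrightarrow>
           real (min_degree E S) \<le> d * (real (card S) - 1)"
    and "W \<subseteq> V"
  shows "\<exists>I \<subseteq> W. independent E I \<and> real (card W) * ((1 - d) * (1 - 1 / u)) ^ card I < u"
  using \<open>W \<subseteq> V\<close>
proof (induction "card W" arbitrary: W rule: less_induct)
  case less
  let ?q = "(1 - d) * (1 - 1 / u)"
  have "finite W" using graph less.prems finite_subset by (auto simp: simple_graph_def)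
  show ?case
  proof (cases "real (card W) < u")
    case True
    then show ?thesis by (intro exI[of _ "{}"]) (auto simp: independent_def)
  next
    case False
    then have "W \<noteq> {}" using \<open>1 \<le> u\<close> by auto
    with \<open>finite W\<close> obtain v where "v \<in> W" and v_min: "deg_in E W v = min_degree E W"
      by (rule obtain_min_degree_vertex)
    define W' where "W' = W - insert v {w \<in> W. E v w}"
    have card_W': "real (card W') = real (card W) - 1 - real (deg_in E W v)"
      unfolding W'_def using graph \<open>finite W\<close> \<open>v \<in> W\<close> by (rule card_Diff_closed_neighbourhood)
    then have "card W' < card W" by linarith
    moreover have "W' \<subseteq> V" using less.prems by (auto simp: W'_def)
    ultimately obtain I' where "I' \<subseteq> W'" "independent E I'"
      and I'_bound: "real (card W') * ?q ^ card I' < u"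
      using less.hyps[of W'] by blast
    have indep: "independent E (insert v I')"
      using graph \<open>independent E I'\<close> by (rule independent_insert) (use \<open>I' \<subseteq> W'\<close> in \<open>auto simp: W'_def\<close>)
    have subset: "insert v I' \<subseteq> W" using \<open>I' \<subseteq> W'\<close> \<open>v \<in> W\<close> by (auto simp: W'_def)
    have "card (insert v I') = Suc (card I')"
    proof -
      have "finite I'" using \<open>I' \<subseteq> W'\<close> \<open>finite W\<close> by (auto simp: W'_def intro: finite_subset)
      moreover have "v \<notin> I'" using \<open>I' \<subseteq> W'\<close> by (auto simp: W'_def)
      ultimately show ?thesis by simp
    qed
    then have "real (card W) * ?q ^ card (insert v I') = ?q * real (card W) * ?q ^ card I'"
      by (simp add: ac_simps)
    also have "\<dots> \<le> real (card W') * ?q ^ card I'"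
    proof (rule mult_right_mono)
      show "?q * real (card W) \<le> real (card W')"
        unfolding card_W' using min_degree_le[OF less.prems] False v_min \<open>d \<le> 1\<close> \<open>1 \<le> u\<close>
        by (intro removal_keeps_fraction) auto
      show "0 \<le> ?q ^ card I'" using \<open>d \<le> 1\<close> \<open>1 \<le> u\<close> by simp
    qed
    also have "\<dots> < u" by (fact I'_bound)
    finally show ?thesis using indep subset by blast
  qed
qed

lemma neg_log_less_of_mult_power_less:
  fixes q n u :: real
  assumes "0 < q" "q < 1" "0 < n" "0 < u" "n * q ^ k < u"
  shows "- log q (n / u) < k"
proof -
  have "ln (n * q ^ k) < ln u" using assms by simp
  then have "real k * ln q < - ln (n / u)"
    using assms(1,3,4) by (simp add: ln_mult ln_realpow ln_div)
  moreover have "ln q < 0" using assms(1,2) by simp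
  ultimately have "(- ln (n / u)) / ln q < real k" by (simp only: neg_divide_less_eq)
  then show ?thesis unfolding log_def minus_divide_left .
qed

theorem lemma6:
  fixes V :: "'a set" and E :: "'a \<Rightarrow> 'a \<Rightarrow> bool" and d u :: real
  assumes "simple_graph V E"
    and "0 < d" and "d < 1" and "1 < u"
    and "\<And>S. S \<subseteq> V \<Longrightarrow> real (card S) \<ge> u \<Longrightarrow>
           real (min_degree E S) \<le> d * (real (card S) - 1)"
    and "W \<subseteq> V" and "real (card W) \<ge> u"
  shows "real (indep_number E W) \<ge> - log ((1 - d) * (1 - 1 / u)) (real (card W) / u)"
proof -
  define q where "q = (1 - d) * (1 - 1 / u)"
  obtain I where "I \<subseteq> W" "independent E I" and I_bound: "real (card W) * q ^ card I < u"
    using greedy_independent_set[OF assms(1) less_imp_le[OF assms(3)] less_imp_le[OF assms(4)] assms(5,6)]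
    unfolding q_def by blast
  have "finite W" using assms(1,6) finite_subset by (auto simp: simple_graph_def)
  have "0 < q" using assms(3,4) by (simp add: q_def)
  moreover have "q < 1"
  proof -
    have "q \<le> 1 - d" unfolding q_def using assms(3,4) by (intro mult_left_le) auto
    then show ?thesis using assms(2) by simp
  qed
  ultimately have "- log q (real (card W) / u) < card I"
    using I_bound assms(4,7) by (intro neg_log_less_of_mult_power_less) auto
  also have "card I \<le> indep_number E W"
    using \<open>finite W\<close> \<open>I \<subseteq> W\<close> \<open>independent E I\<close> by (rule card_le_indep_number)
  finally show ?thesis unfolding q_def by simp
qed

end
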